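(* Let $A\in\mathbb{R}^{n_x\times n_x}$, $B\in\mathbb{R}^{n_x\times n_u}$, and let $Q\in\mathbb{R}^{n_x\times n_x}$, $R\in\mathbb{R}^{n_u\times n_u}$ be symmetric positive definite, with $(A,B)$ stabilizable. Let $\mathcal{K}=\{K\in\mathbb{R}^{n_u\times n_x}:\rho(A-BK)<1\}$ and for $K\in\mathcal{K}$ let $$J(K)=\sup_{\omega\in[0,2\pi]}\lambda_{\max}^{1/2}\Big((e^{-j\omega}I-A+BK)^{-\mathsf{T}}(Q+K^{\mathsf{T}}RK)(e^{j\omega}I-A+BK)^{-1}\Big).$$ Then $J$ is coercive over $\mathcal{K}$ in the following sense: for any sequence $\{K^l\}_{l=1}^\infty\subset\mathcal{K}$, we have $J(K^l)\to+\infty$ if either $\|K^l\|_F\to+\infty$, or $K^l$ converges to a point of the boundary $\partial\mathcal{K}$.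
   Context: $\rho(\cdot)$ denotes spectral radius, $j=\sqrt{-1}$, $\lambda_{\max}$ the largest eigenvalue of a Hermitian matrix, and $\|\cdot\|_F$ the Frobenius norm. $J(K)$ is the $\mathcal{H}_\infty$ norm (equivalently the $\ell_2\to\ell_2$ induced norm from $\{w_t\}$ to $\{(Q+K^{\mathsf T}RK)^{1/2}x_t\}$) of the closed-loop system $x_{t+1}=(A-BK)x_t+w_t$, $x_0=0$. The boundary $\partial\mathcal{K}$ is taken in $\mathbb{R}^{n_u\times n_x}$. *)

theory Defs
  imports "HOL-Analysis.Analysis"
begin

definition cmat :: "real^'n^'m \<Rightarrow> complex^'n^'m" where
  "cmat M = (\<chi> i j. complex_of_real (M $ i $ j))"

definition is_eigenvalue :: "complex^'n^'n \<Rightarrow> complex \<Rightarrow> bool" where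
  "is_eigenvalue M c \<longleftrightarrow> (\<exists>v. v \<noteq> 0 \<and> M *v v = c *s v)"

definition spec_rad :: "real^'n^'n \<Rightarrow> real" where
  "spec_rad M = Max (norm ` {c. is_eigenvalue (cmat M) c})"

text \<open>Largest eigenvalue of a Hermitian matrix (whose eigenvalues are real).\<close>
definition lambda_max :: "complex^'n^'n \<Rightarrow> real" where
  "lambda_max H = Max {x::real. is_eigenvalue H (complex_of_real x)}"

definition sym_pd :: "real^'n^'n \<Rightarrow> bool" where
  "sym_pd M \<longleftrightarrow> transpose M = M \<and> (\<forall>x. x \<noteq> 0 \<longrightarrow> x \<bullet> (M *v x) > 0)"

definition stabilizable :: "real^'nx^'nx \<Rightarrow> real^'nu^'nx \<Rightarrow> bool" where
  "stabilizable A B \<longleftrightarrow> (\<exists>K::real^'nx^'nu. spec_rad (A - B ** K) < 1)"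

definition stab_set :: "real^'nx^'nx \<Rightarrow> real^'nu^'nx \<Rightarrow> (real^'nx^'nu) set" where
  "stab_set A B = {K. spec_rad (A - B ** K) < 1}"

definition Jcost :: "real^'nx^'nx \<Rightarrow> real^'nu^'nx \<Rightarrow> real^'nx^'nx \<Rightarrow> real^'nu^'nu
                      \<Rightarrow> real^'nx^'nu \<Rightarrow> real" where
  "Jcost A B Q R K =
     (SUP \<omega>\<in>{0..2*pi}.
        sqrt (lambda_max
          (transpose (matrix_inv (mat (cis (-\<omega>)) - cmat A + cmat (B ** K)))
           ** cmat (Q + transpose K ** R ** K)
           ** matrix_inv (mat (cis \<omega>) - cmat A + cmat (B ** K)))))"

end

theory Submission
  imports Defs "HOL-Complex_Analysis.Complex_Analysis"
    "HOL-Computational_Algebra.Fundamental_Theorem_Algebra"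
begin

text \<open>
  Fix a stabilising gain K and put N = A - B K and W = Q + K^T R K. Because J(K) is a supremum
  over the unit circle, x^* W x \<le> J(K)^2 |(z I - N) x|^2 whenever |z| = 1, while
  W \<ge> q I + r K^T K for some q, r > 0. All eigenvalues of N lie in the open unit disc, so the
  resolvent is holomorphic in w = 1/z on the closed disc, and the maximum modulus principle
  extends such bounds from the circle to the whole exterior |z| \<ge> 1, including z = \<infinity>.
  At z = \<infinity> this gives |K x| \<le> J(K) / sqrt r |x|, hence ||K|| \<le> const J(K).
  On the exterior it gives |y| \<le> J(K) / sqrt q |(z I - N) y|, which survives perturbations of
  K of norm below sqrt q / (J(K) (||B|| + 1)). So all gains with J(K) \<le> C have a ball of a fixed
  radius around them inside the stabilising set, and J cannot stay bounded along a sequence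
  approaching the boundary of that set.
\<close>

(* The FPS coefficient notation would make vector indexing ambiguous. *)
no_notation fps_nth (infixl \<open>$\<close> 75)

lemma mat_mult_vector: "mat c *v v = c *s (v :: 'a::comm_semiring_1^'n)"
  by (simp add: vec_eq_iff matrix_vector_mult_def mat_def if_distrib if_distribR cong: if_cong)

lemma mat_mult_matrix: "mat c ** X = (\<chi> i j. c * X $ i $ j)" for X :: "'a::comm_semiring_1^'m^'n"
  by (simp add: vec_eq_iff matrix_matrix_mult_def mat_def if_distrib if_distribR cong: if_cong)

lemma det_mat: "det (mat c :: 'a::comm_ring_1^'n^'n) = c ^ CARD('n)"
  by (subst det_diagonal) (auto simp: mat_def)

lemma mat_mult_mat_inverse_minus:
  fixes N :: "'a::field^'n^'n"
  assumes "u \<noteq> 0"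
  shows "mat u ** (mat (1 / u) - N) = mat 1 - mat u ** N"
  using assms by (simp only: mat_mult_matrix) (auto simp: vec_eq_iff mat_def right_diff_distrib)

lemma transpose_add: "transpose (X + Y) = transpose X + transpose (Y :: 'a::semiring_1^'n^'m)"
  by (simp add: transpose_def vec_eq_iff)

lemma matrix_vector_mult_scaleR:
  fixes A :: "'a::real_algebra_1^'n^'m"
  shows "A *v (c *\<^sub>R x) = c *\<^sub>R (A *v x)"
  by (simp add: vec_eq_iff matrix_vector_mult_def scaleR_sum_right)

lemma of_real_vector_smult: "(of_real c :: 'a::real_algebra_1) *s x = c *\<^sub>R x"
  by (simp add: vec_eq_iff) (simp add: scaleR_conv_of_real)

lemma invertible_matrix_inv:
  assumes "invertible (X :: 'a::semiring_1^'n^'n)"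
  shows "X ** matrix_inv X = mat 1" and "matrix_inv X ** X = mat 1"
  using someI_ex[OF assms[unfolded invertible_def]] by (simp_all add: matrix_inv_def)

lemma matrix_inv_unique:
  fixes X :: "'a::semiring_1^'n^'n"
  assumes "X ** Y = mat 1" and "Y ** X = mat 1"
  shows "matrix_inv X = Y"
proof -
  have "invertible X"
    using assms invertible_def by blast
  then have "matrix_inv X = matrix_inv X ** (X ** Y)"
    by (simp add: assms)
  also have "\<dots> = Y"
    by (simp add: matrix_mul_assoc invertible_matrix_inv(2)[OF \<open>invertible X\<close>])
  finally show ?thesis .
qed

lemma cmat_diff: "cmat (X - Y) = cmat X - cmat Y"
  by (simp add: cmat_def vec_eq_iff)

lemma cmat_mult: "cmat (X ** Y) = cmat X ** cmat Y"
  by (simp add: cmat_def vec_eq_iff matrix_matrix_mult_def)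

lemma transpose_cmat: "transpose (cmat X) = cmat (transpose X)"
  by (simp add: cmat_def vec_eq_iff transpose_def)

section \<open>Eigenvalues and the spectral radius\<close>

lemma holomorphic_on_det:
  assumes "\<And>i j. (\<lambda>z. F z $ i $ j) holomorphic_on U"
  shows "(\<lambda>z. det (F z :: complex^'n^'n)) holomorphic_on U"
  unfolding det_def by (intro holomorphic_intros assms)

lemma is_eigenvalue_iff_det: "is_eigenvalue M c \<longleftrightarrow> det (mat c - M) = 0"
proof -
  have "is_eigenvalue M c \<longleftrightarrow> (\<exists>v. v \<noteq> 0 \<and> (mat c - M) *v v = 0)"
    unfolding is_eigenvalue_def matrix_vector_mult_diff_rdistrib mat_mult_vector
    by (metis right_minus_eq)
  also have "\<dots> \<longleftrightarrow> \<not> invertible (mat c - M)"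
    unfolding invertible_left_inverse matrix_left_invertible_ker by blast
  finally show ?thesis
    by (simp add: invertible_det_nz)
qed

definition charpoly :: "complex^'n^'n \<Rightarrow> complex poly" where
  "charpoly M = det (mat [:0, 1:] - (\<chi> i j. [:M $ i $ j:]))"

lemma poly_charpoly: "poly (charpoly M) z = det (mat z - M)"
  unfolding charpoly_def det_def
  by (auto simp: poly_sum poly_prod mat_def intro!: sum.cong prod.cong)

(* If det (z I - M) were constant, det (I - t M) = t^n det (- M) would tend to 0 as t -> 0,
   whereas it is continuous with value 1 at t = 0. *)
lemma charpoly_nonconstant: "\<not> constant (poly (charpoly (M :: complex^'n^'n)))"
proof
  assume "constant (poly (charpoly M))"
  then have const: "det (mat z - M) = det (mat 0 - M)" for z
    unfolding constant_def poly_charpoly[symmetric] by metis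
  define g where "g t = det (mat 1 - mat t ** M)" for t
  have "g holomorphic_on UNIV"
    unfolding g_def mat_mult_matrix
    by (rule holomorphic_on_det) (auto simp: mat_def intro!: holomorphic_intros)
  then have "(g \<longlongrightarrow> g 0) (at 0)"
    by (metis UNIV_I holomorphic_on_imp_continuous_on continuous_on_eq_continuous_at open_UNIV isCont_def)
  moreover have "g 0 = 1"
    by (simp add: g_def mat_mult_matrix mat_def[symmetric])
  moreover have "(g \<longlongrightarrow> 0) (at 0)"
  proof (rule Lim_transform_eventually)
    show "((\<lambda>t. t ^ CARD('n) * det (mat 0 - M)) \<longlongrightarrow> 0) (at 0)"
      by (auto intro!: tendsto_eq_intros)
    show "\<forall>\<^sub>F t in at 0. t ^ CARD('n) * det (mat 0 - M) = g t"
      unfolding eventually_at_filter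
    proof (intro always_eventually allI impI)
      fix t :: complex
      assume "t \<noteq> 0"
      then show "t ^ CARD('n) * det (mat 0 - M) = g t"
        using const[of "1 / t"]
        by (simp add: g_def flip: mat_mult_mat_inverse_minus add: det_mul det_mat)
    qed
  qed
  ultimately show False
    using tendsto_unique[OF at_neq_bot] by fastforce
qed

lemma finite_eigenvalues: "finite {c. is_eigenvalue M c}"
proof -
  have "charpoly M \<noteq> 0"
    using charpoly_nonconstant[of M] by (auto simp: constant_def)
  then show ?thesis
    unfolding is_eigenvalue_iff_det poly_charpoly[symmetric] by (rule poly_roots_finite)
qed

lemma ex_eigenvalue: "\<exists>c. is_eigenvalue M c"
  using fundamental_theorem_of_algebra[OF charpoly_nonconstant[of M]]
  unfolding is_eigenvalue_iff_det poly_charpoly by blast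

lemma spec_rad_less_one_iff:
  "spec_rad N < 1 \<longleftrightarrow> (\<forall>c. is_eigenvalue (cmat N) c \<longrightarrow> cmod c < 1)"
  unfolding spec_rad_def using finite_eigenvalues ex_eigenvalue
  by (subst Max_less_iff) auto

lemma stab_set_iff: "K \<in> stab_set A B \<longleftrightarrow> (\<forall>c. is_eigenvalue (cmat (A - B ** K)) c \<longrightarrow> cmod c < 1)"
  by (simp add: stab_set_def spec_rad_less_one_iff)

lemma norm_sum_mult_le:
  fixes x y :: "'a::real_normed_div_algebra^'n"
  shows "norm (\<Sum>i\<in>UNIV. x $ i * y $ i) \<le> norm x * norm y"
proof -
  have "norm (\<Sum>i\<in>UNIV. x $ i * y $ i) \<le> (\<Sum>i\<in>UNIV. \<bar>norm (x $ i)\<bar> * \<bar>norm (y $ i)\<bar>)"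
    by (rule order_trans[OF norm_sum]) (simp add: norm_mult)
  also have "\<dots> \<le> L2_set (\<lambda>i. norm (x $ i)) UNIV * L2_set (\<lambda>i. norm (y $ i)) UNIV"
    by (rule L2_set_mult_ineq)
  finally show ?thesis
    by (simp add: norm_vec_def)
qed

lemma norm_vector_smult: "norm (c *s x) = norm c * norm (x :: 'a::real_normed_div_algebra^'n)"
  by (simp add: norm_vec_def norm_mult L2_set_right_distrib)

lemma norm_matrix_vector_mult_le:
  fixes L :: "'a::real_normed_div_algebra^'n^'m"
  shows "norm (L *v x) \<le> norm L * norm x"
proof -
  have row: "norm ((L *v x) $ i) \<le> norm (L $ i) * norm x" for i
    unfolding matrix_vector_mult_def vec_lambda_beta by (rule norm_sum_mult_le)
  have "norm (L *v x) = L2_set (\<lambda>i. norm ((L *v x) $ i)) UNIV"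
    by (simp only: norm_vec_def)
  also have "\<dots> \<le> L2_set (\<lambda>i. norm (L $ i) * norm x) UNIV"
    by (intro L2_set_mono row) auto
  also have "\<dots> = norm L * norm x"
    by (simp add: L2_set_left_distrib norm_vec_def[of L])
  finally show ?thesis .
qed

lemma norm_matrix_le_of_mult_bound:
  fixes L :: "complex^'n^'m"
  assumes "\<And>x. norm (L *v x) \<le> C * norm x"
  shows "norm L \<le> real CARD('m) * real CARD('n) * C"
proof -
  have entry: "norm (L $ i $ j) \<le> C" for i j
  proof -
    have "(L *v axis j 1) $ i = L $ i $ j"
      by (simp add: matrix_vector_mult_def axis_def if_distrib if_distribR cong: if_cong)
    then have "norm (L $ i $ j) \<le> norm (L *v axis j 1)"
      by (metis Finite_Cartesian_Product.norm_nth_le)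
    also have "\<dots> \<le> C"
      using assms[of "axis j 1"] by (simp add: inner_axis' norm_eq_1)
    finally show ?thesis .
  qed
  have "norm L \<le> (\<Sum>i\<in>UNIV. norm (L $ i))"
    unfolding norm_vec_def by (rule L2_set_le_sum) simp
  also have "\<dots> \<le> (\<Sum>i\<in>UNIV. \<Sum>j\<in>UNIV. norm (L $ i $ j))"
    unfolding norm_vec_def[of "L $ _"] by (intro sum_mono L2_set_le_sum) simp
  also have "\<dots> \<le> (\<Sum>i\<in>(UNIV::'m set). \<Sum>j\<in>(UNIV::'n set). C)"
    by (intro sum_mono entry)
  finally show ?thesis
    by simp
qed

lemma norm_cmat: "norm (cmat M) = norm M"
  by (simp add: norm_vec_def cmat_def)

section \<open>Hermitian forms and the largest eigenvalue\<close>

definition mat_cnj :: "complex^'n^'m \<Rightarrow> complex^'n^'m" where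
  "mat_cnj M = (\<chi> i j. cnj (M $ i $ j))"

lemma mat_cnj_mult: "mat_cnj (X ** Y) = mat_cnj X ** mat_cnj Y"
  by (simp add: mat_cnj_def matrix_matrix_mult_def vec_eq_iff)

lemma mat_cnj_mat: "mat_cnj (mat c) = mat (cnj c)"
  by (simp add: mat_cnj_def mat_def vec_eq_iff)

lemma mat_cnj_cmat: "mat_cnj (cmat X) = cmat X"
  by (simp add: mat_cnj_def cmat_def vec_eq_iff)

(* On complex^'n the library inner product is x \<bullet> y = Re (\<Sum>i. cnj (x$i) * y$i). A matrix that
   is self-adjoint for it is Hermitian, and x \<bullet> (H *v x) is its Hermitian form. *)
lemma inner_conj_transpose: "x \<bullet> (transpose (mat_cnj M) *v y) = (M *v x) \<bullet> y"
proof -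
  have inner_cnj: "a \<bullet> b = Re (cnj a * b)" for a b :: complex
    by (simp add: inner_complex_def)
  have "x \<bullet> (transpose (mat_cnj M) *v y) = Re (\<Sum>i\<in>UNIV. \<Sum>j\<in>UNIV. cnj (M $ j $ i * x $ i) * y $ j)"
    by (simp add: inner_vec_def inner_cnj matrix_vector_mult_def transpose_def mat_cnj_def
        sum_distrib_left mult_ac)
  also have "\<dots> = (M *v x) \<bullet> y"
    by (subst sum.swap) (simp add: inner_vec_def inner_cnj matrix_vector_mult_def sum_distrib_right)
  finally show ?thesis .
qed

lemma matrix_inv_mat_cnj:
  assumes "invertible (X :: complex^'n^'n)"
  shows "matrix_inv (mat_cnj X) = mat_cnj (matrix_inv X)"
  by (rule matrix_inv_unique)
    (simp_all add: invertible_matrix_inv[OF assms] flip: mat_cnj_mult add: mat_cnj_mat)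

lemma homogeneous_quadratic_attains_sup:
  fixes f :: "'a::euclidean_space \<Rightarrow> real"
  assumes cont: "continuous_on UNIV f" and hom: "\<And>c x. f (c *\<^sub>R x) = c\<^sup>2 * f x"
  shows "\<exists>v. norm v = 1 \<and> (\<forall>x. f x \<le> f v * (norm x)\<^sup>2)"
proof -
  have "sphere (0::'a) 1 \<noteq> {}"
    by simp
  then obtain v where v: "v \<in> sphere 0 1" and max: "\<And>y. y \<in> sphere 0 1 \<Longrightarrow> f y \<le> f v"
    using continuous_attains_sup[OF compact_sphere _ continuous_on_subset[OF cont]] by blast
  have "f x \<le> f v * (norm x)\<^sup>2" for x
  proof (cases "x = 0")
    case True
    then show ?thesis
      using hom[of 0 x] by simp
  next
    case False
    then have "(norm x)\<^sup>2 * f ((1 / norm x) *\<^sub>R x) \<le> (norm x)\<^sup>2 * f v"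
      by (intro mult_left_mono max) simp_all
    with False show ?thesis
      by (simp add: hom power_divide mult.commute)
  qed
  with v show ?thesis
    by auto
qed

lemma nonneg_quadratic_imp_linear_coeff_zero:
  fixes a b :: real
  assumes "\<And>t. 0 \<le> t * a + t\<^sup>2 * b"
  shows "a = 0"
proof (rule ccontr)
  assume "a \<noteq> 0"
  define s where "s = \<bar>b\<bar> + 1"
  have s: "s > 0" "b < s"
    by (simp_all add: s_def add_pos_nonneg)
  have "(- a / s) * a + (- a / s)\<^sup>2 * b = a\<^sup>2 * (b - s) / s\<^sup>2"
    using s by (simp add: field_simps power2_eq_square)
  also have "\<dots> < 0"
    using \<open>a \<noteq> 0\<close> s by (intro divide_neg_pos mult_pos_neg) auto
  finally show False
    using assms[of "- a / s"] by simp
qed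

lemma selfadjoint_psd_null:
  fixes G :: "complex^'n^'n"
  assumes sa: "\<And>x y. x \<bullet> (G *v y) = (G *v x) \<bullet> y"
    and psd: "\<And>x. 0 \<le> x \<bullet> (G *v x)" and null: "v \<bullet> (G *v v) = 0"
  shows "G *v v = 0"
proof -
  have "2 * (w \<bullet> (G *v v)) = 0" for w
  proof (rule nonneg_quadratic_imp_linear_coeff_zero)
    fix t :: real
    have "0 \<le> (v + t *\<^sub>R w) \<bullet> (G *v (v + t *\<^sub>R w))"
      by (rule psd)
    also have "\<dots> = t * (2 * (w \<bullet> (G *v v))) + t\<^sup>2 * (w \<bullet> (G *v w))"
      using null sa[of v w] inner_commute[of "G *v v" w]
      by (simp add: matrix_vector_mult_scaleR power2_eq_square algebra_simps)
    finally show "0 \<le> t * (2 * (w \<bullet> (G *v v))) + t\<^sup>2 * (w \<bullet> (G *v w))" .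
  qed
  then show ?thesis
    using inner_eq_zero_iff by (metis mult_eq_0_iff zero_neq_numeral)
qed

lemma Rayleigh_maximiser_eigenvector:
  fixes H :: "complex^'n^'n"
  assumes sa: "\<And>x y. x \<bullet> (H *v y) = (H *v x) \<bullet> y"
    and bound: "\<And>x. x \<bullet> (H *v x) \<le> m * (norm x)\<^sup>2"
    and v: "norm v = 1" "v \<bullet> (H *v v) = m"
  shows "H *v v = complex_of_real m *s v"
proof -
  define G where "G = mat (complex_of_real m) - H"
  have G: "G *v x = m *\<^sub>R x - H *v x" for x
    by (simp add: G_def matrix_vector_mult_diff_rdistrib mat_mult_vector of_real_vector_smult)
  have "G *v v = 0"
  proof (rule selfadjoint_psd_null)
    show "x \<bullet> (G *v y) = (G *v x) \<bullet> y" for x y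
      using sa[of x y] by (simp add: G inner_diff_left inner_diff_right)
    show "0 \<le> x \<bullet> (G *v x)" for x
      using bound[of x] by (simp add: G inner_diff_right power2_norm_eq_inner)
    show "v \<bullet> (G *v v) = 0"
      using v by (simp add: G inner_diff_right flip: power2_norm_eq_inner)
  qed
  then show ?thesis
    by (simp add: G of_real_vector_smult)
qed

lemma lambda_max_Rayleigh:
  fixes H :: "complex^'n^'n"
  assumes sa: "\<And>x y. x \<bullet> (H *v y) = (H *v x) \<bullet> y"
  shows "x \<bullet> (H *v x) \<le> lambda_max H * (norm x)\<^sup>2"
    and "\<exists>v. norm v = 1 \<and> lambda_max H = v \<bullet> (H *v v)"
proof -
  have "continuous_on UNIV (\<lambda>x. x \<bullet> (H *v x))"
    unfolding matrix_vector_mult_def inner_vec_def by (intro continuous_intros)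
  moreover have "(c *\<^sub>R x) \<bullet> (H *v (c *\<^sub>R x)) = c\<^sup>2 * (x \<bullet> (H *v x))" for c x
    by (simp add: matrix_vector_mult_scaleR power2_eq_square)
  ultimately obtain v where v: "norm v = 1"
    and bound: "\<And>x. x \<bullet> (H *v x) \<le> v \<bullet> (H *v v) * (norm x)\<^sup>2"
    using homogeneous_quadratic_attains_sup[of "\<lambda>x. x \<bullet> (H *v x)"] by blast
  define m where "m = v \<bullet> (H *v v)"
  note bound = bound[folded m_def]
  have "H *v v = complex_of_real m *s v"
    using sa bound v by (rule Rayleigh_maximiser_eigenvector) (simp add: m_def)
  then have eigenvalue: "is_eigenvalue H (complex_of_real m)"
    using v unfolding is_eigenvalue_def by (intro exI[of _ v]) auto
  have maximal: "x \<le> m" if eig: "is_eigenvalue H (complex_of_real x)" for x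
  proof -
    obtain u where u: "u \<noteq> 0" "H *v u = complex_of_real x *s u"
      using eig unfolding is_eigenvalue_def by blast
    have "x * (norm u)\<^sup>2 = u \<bullet> (H *v u)"
      by (simp only: u(2) of_real_vector_smult inner_scaleR_right power2_norm_eq_inner)
    also have "\<dots> \<le> m * (norm u)\<^sup>2"
      by (rule bound)
    finally show ?thesis
      using u(1) by simp
  qed
  have "finite {x. is_eigenvalue H (complex_of_real x)}"
    using finite_vimageI[OF finite_eigenvalues[of H], of complex_of_real] by (simp add: inj_on_def)
  then have "lambda_max H = m"
    unfolding lambda_max_def using eigenvalue maximal by (intro Max_eqI) simp_all
  with bound v show "x \<bullet> (H *v x) \<le> lambda_max H * (norm x)\<^sup>2"
    and "\<exists>v. norm v = 1 \<and> lambda_max H = v \<bullet> (H *v v)"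
    by (auto simp: m_def)
qed

lemma lambda_max_congruence:
  fixes S M :: "complex^'n^'n"
  assumes sa: "\<And>x y. x \<bullet> (S *v y) = (S *v x) \<bullet> y"
    and psd: "\<And>x. 0 \<le> x \<bullet> (S *v x)" and inv: "invertible M"
  defines "H \<equiv> transpose (mat_cnj (matrix_inv M)) ** S ** matrix_inv M"
  shows "0 \<le> lambda_max H"
    and "x \<bullet> (S *v x) \<le> lambda_max H * (norm (M *v x))\<^sup>2"
    and "\<lbrakk>c > 0; \<And>y. c * norm y \<le> norm (M *v y)\<rbrakk> \<Longrightarrow> lambda_max H \<le> norm S / c\<^sup>2"
proof -
  define Y where "Y = matrix_inv M"
  have MY: "M ** Y = mat 1" "Y ** M = mat 1"
    using invertible_matrix_inv[OF inv] by (simp_all add: Y_def)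
  have H: "u \<bullet> (H *v v) = (Y *v u) \<bullet> (S *v (Y *v v))" for u v
  proof -
    have "H *v v = transpose (mat_cnj Y) *v (S *v (Y *v v))"
      by (simp only: H_def Y_def matrix_vector_mul_assoc matrix_mul_assoc)
    then show ?thesis
      by (simp only: inner_conj_transpose)
  qed
  have sa_H: "u \<bullet> (H *v v) = (H *v u) \<bullet> v" for u v
    by (metis H sa inner_commute)
  obtain v where v: "norm v = 1" "lambda_max H = v \<bullet> (H *v v)"
    using lambda_max_Rayleigh(2)[OF sa_H] by blast
  show "0 \<le> lambda_max H"
    by (simp add: v(2) H psd)
  have "Y *v (M *v x) = x"
    by (simp add: matrix_vector_mul_assoc MY)
  then have "x \<bullet> (S *v x) = (M *v x) \<bullet> (H *v (M *v x))"
    by (simp only: H)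
  also have "\<dots> \<le> lambda_max H * (norm (M *v x))\<^sup>2"
    by (rule lambda_max_Rayleigh(1)[OF sa_H])
  finally show "x \<bullet> (S *v x) \<le> lambda_max H * (norm (M *v x))\<^sup>2" .
  assume c: "c > 0" "\<And>y. c * norm y \<le> norm (M *v y)"
  have "c * norm (Y *v v) \<le> 1"
    using c(2)[of "Y *v v"] v(1) by (simp add: matrix_vector_mul_assoc MY)
  then have Yv: "norm (Y *v v) \<le> 1 / c"
    using c(1) by (simp add: field_simps)
  have "lambda_max H = (Y *v v) \<bullet> (S *v (Y *v v))"
    by (simp add: v(2) H)
  also have "\<dots> \<le> norm (Y *v v) * norm (S *v (Y *v v))"
    by (rule norm_cauchy_schwarz)
  also have "\<dots> \<le> norm S * (norm (Y *v v))\<^sup>2"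
    using mult_left_mono[OF norm_matrix_vector_mult_le[of S "Y *v v"] norm_ge_zero[of "Y *v v"]]
    by (simp add: power2_eq_square mult_ac)
  also have "\<dots> \<le> norm S * (1 / c)\<^sup>2"
    by (intro mult_left_mono power_mono Yv) simp_all
  finally show "lambda_max H \<le> norm S / c\<^sup>2"
    by (simp add: power_one_over)
qed

section \<open>Resolvent estimates\<close>

lemma unit_circle_resolvent_lower_bound:
  fixes N :: "complex^'n^'n"
  assumes stable: "\<And>c. is_eigenvalue N c \<Longrightarrow> cmod c < 1"
  obtains c where "c > 0" and "\<And>z x. cmod z = 1 \<Longrightarrow> c * norm x \<le> norm ((mat z - N) *v x)"
proof -
  define F where "F p = norm ((mat (fst p) - N) *v snd p)" for p :: "complex \<times> (complex^'n)"
  define S where "S = sphere (0::complex) 1 \<times> sphere (0::complex^'n) 1"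
  have "(mat (fst p) - N) *v snd p = (\<chi> i. fst p * snd p $ i - (\<Sum>j\<in>UNIV. N $ i $ j * snd p $ j))"
    for p
    unfolding matrix_vector_mult_diff_rdistrib mat_mult_vector
    by (simp add: vec_eq_iff matrix_vector_mult_def)
  then have "continuous_on S F"
    unfolding F_def by (simp only:) (intro continuous_intros continuous_on_vec_lambda)
  moreover have "compact S" "S \<noteq> {}"
    by (simp_all add: S_def compact_Times)
  ultimately obtain p where p: "p \<in> S" and min: "\<And>p'. p' \<in> S \<Longrightarrow> F p \<le> F p'"
    using continuous_attains_inf by metis
  have "F p > 0"
  proof (rule ccontr)
    assume "\<not> F p > 0"
    then have "N *v snd p = fst p *s snd p"
      by (simp add: F_def matrix_vector_mult_diff_rdistrib mat_mult_vector)
    moreover have "snd p \<noteq> 0" "cmod (fst p) = 1"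
      using p by (auto simp: S_def)
    ultimately show False
      using stable[of "fst p"] unfolding is_eigenvalue_def by auto
  qed
  moreover have "F p * norm x \<le> norm ((mat z - N) *v x)" if "cmod z = 1" for z x
  proof (cases "x = 0")
    case False
    then have "F p \<le> F (z, (1 / norm x) *\<^sub>R x)"
      using that by (intro min) (simp add: S_def)
    with False show ?thesis
      by (simp add: F_def matrix_vector_mult_scaleR field_simps)
  qed simp
  ultimately show ?thesis
    using that by blast
qed

(* The scalar maximum modulus principle, applied to u \<mapsto> \<langle>F w, F u\<rangle>. *)
lemma vector_maximum_modulus_cball:
  fixes F :: "complex \<Rightarrow> complex^'n"
  assumes holo: "\<And>k. (\<lambda>u. F u $ k) holomorphic_on U" and "open U" and "cball \<xi> r \<subseteq> U"
    and sphere: "\<And>u. u \<in> sphere \<xi> r \<Longrightarrow> norm (F u) \<le> B" and w: "w \<in> cball \<xi> r"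
  shows "norm (F w) \<le> B"
proof -
  define a where "a = (\<chi> i. cnj (F w $ i))"
  define h where "h u = (\<Sum>i\<in>UNIV. a $ i * F u $ i)" for u
  have "norm a = norm (F w)"
    by (simp add: a_def norm_vec_def)
  have "h holomorphic_on U"
    unfolding h_def by (intro holomorphic_intros holo)
  have "cmod (h w) \<le> norm (F w) * B"
  proof (rule maximum_modulus_frontier[of h "cball \<xi> r"])
    show "h holomorphic_on interior (cball \<xi> r)"
      using \<open>cball \<xi> r \<subseteq> U\<close> interior_subset
      by (blast intro: holomorphic_on_subset[OF \<open>h holomorphic_on U\<close>])
    show "continuous_on (closure (cball \<xi> r)) h"
      using \<open>h holomorphic_on U\<close> \<open>cball \<xi> r \<subseteq> U\<close> \<open>open U\<close>
      by (auto intro: holomorphic_on_imp_continuous_on continuous_on_subset)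
    show "cmod (h u) \<le> norm (F w) * B" if "u \<in> frontier (cball \<xi> r)" for u
    proof -
      have "cmod (h u) \<le> norm a * norm (F u)"
        unfolding h_def by (rule norm_sum_mult_le)
      also have "\<dots> \<le> norm (F w) * B"
        using that sphere[of u] by (simp add: \<open>norm a = norm (F w)\<close> mult_left_mono)
      finally show ?thesis .
    qed
  qed (use w in auto)
  moreover have "h w = of_real ((norm (F w))\<^sup>2)"
    by (simp add: h_def a_def mult.commute norm_vec_def L2_set_def sum_nonneg
        flip: complex_norm_square)
  ultimately have square: "(norm (F w))\<^sup>2 \<le> norm (F w) * B"
    by (simp add: norm_power)
  have "0 \<le> r"
    using w by (meson mem_cball order_trans zero_le_dist)
  then have "\<xi> + of_real r \<in> sphere \<xi> r"
    by (simp add: dist_norm)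
  then have "0 \<le> B"
    using order_trans[OF norm_ge_zero sphere] by blast
  with square show ?thesis
    by (cases "norm (F w) = 0") (auto simp: power2_eq_square)
qed

lemma holomorphic_cramer:
  fixes D :: "complex \<Rightarrow> complex^'n^'n"
  assumes entries: "\<And>i j. (\<lambda>u. D u $ i $ j) holomorphic_on UNIV"
  obtains g where "\<And>k. (\<lambda>u. g u $ k) holomorphic_on {u. det (D u) \<noteq> 0}"
    and "\<And>u. det (D u) \<noteq> 0 \<Longrightarrow> D u *v g u = x"
proof
  define g where "g u = (\<chi> k. det (\<chi> i j. if j = k then x $ i else D u $ i $ j) / det (D u))" for u
  show "D u *v g u = x" if "det (D u) \<noteq> 0" for u
    using cramer[OF that] unfolding g_def by blast
  show "(\<lambda>u. g u $ k) holomorphic_on {u. det (D u) \<noteq> 0}" for k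
  proof -
    have numerator: "(\<lambda>u. det (\<chi> i j. if j = k then x $ i else D u $ i $ j)) holomorphic_on UNIV"
    proof (rule holomorphic_on_det)
      show "(\<lambda>u. (\<chi> i j. if j = k then x $ i else D u $ i $ j) $ i $ j) holomorphic_on UNIV" for i j
        by (cases "j = k") (simp_all add: entries)
    qed
    have denominator: "(\<lambda>u. det (D u)) holomorphic_on UNIV"
      by (rule holomorphic_on_det) (rule entries)
    show ?thesis
      unfolding g_def vec_lambda_beta
      by (intro holomorphic_on_divide holomorphic_on_subset[OF numerator]
          holomorphic_on_subset[OF denominator]) auto
  qed
qed

lemma det_one_minus_stable_nonzero:
  fixes N :: "complex^'n^'n"
  assumes stable: "\<And>c. is_eigenvalue N c \<Longrightarrow> cmod c < 1" and "cmod u \<le> 1"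
  shows "det (mat 1 - mat u ** N) \<noteq> 0"
proof (cases "u = 0")
  case True
  then show ?thesis
    by (simp add: mat_mult_matrix mat_def[symmetric])
next
  case False
  with assms(2) have "\<not> is_eigenvalue N (1 / u)"
    using stable[of "1 / u"] by (auto simp: norm_divide field_simps)
  with False show ?thesis
    by (simp add: is_eigenvalue_iff_det det_mul det_mat flip: mat_mult_mat_inverse_minus)
qed

(* With w = 1/z this carries a bound on the unit circle over to the exterior |z| \<ge> 1, w = 0
   corresponding to z = \<infinity>: mat 1 - mat w ** N stays invertible for |w| \<le> 1, and Cramer's rule
   makes its inverse holomorphic in w. *)
lemma max_modulus_resolvent_bound:
  fixes N :: "complex^'n^'n" and L :: "complex^'n^'m"
  assumes stable: "\<And>c. is_eigenvalue N c \<Longrightarrow> cmod c < 1"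
    and circle: "\<And>z y. cmod z = 1 \<Longrightarrow> norm (L *v y) \<le> C * norm ((mat z - N) *v y)"
    and w: "cmod w \<le> 1"
  shows "norm (L *v y) \<le> C * norm ((mat 1 - mat w ** N) *v y)"
proof -
  define D where "D u = mat 1 - mat u ** N" for u
  have D_entries: "(\<lambda>u. D u $ i $ j) holomorphic_on UNIV" for i j
    unfolding D_def mat_mult_matrix by (auto simp: mat_def intro!: holomorphic_intros)
  have det_D: "det (D u) \<noteq> 0" if "cmod u \<le> 1" for u
    unfolding D_def using stable that by (rule det_one_minus_stable_nonzero)
  define x where "x = D w *v y"
  obtain g where holo_g: "\<And>k. (\<lambda>u. g u $ k) holomorphic_on {u. det (D u) \<noteq> 0}"
    and g: "\<And>u. det (D u) \<noteq> 0 \<Longrightarrow> D u *v g u = x"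
    using holomorphic_cramer[OF D_entries] by blast
  have "D w *v g w = D w *v y"
    using g[OF det_D[OF w]] by (simp add: x_def)
  moreover have "inj ((*v) (D w))"
    using det_D[OF w]
    by (simp add: invertible_det_nz[symmetric] invertible_left_inverse matrix_left_invertible_injective)
  ultimately have "g w = y"
    by (simp add: inj_eq)
  have "norm (L *v g w) \<le> C * norm x"
  proof (rule vector_maximum_modulus_cball[of _ "{u. det (D u) \<noteq> 0}" 0 1])
    show "(\<lambda>u. (L *v g u) $ k) holomorphic_on {u. det (D u) \<noteq> 0}" for k
      unfolding matrix_vector_mult_def vec_lambda_beta by (intro holomorphic_intros holo_g)
    show "open {u. det (D u) \<noteq> 0}"
      using holomorphic_on_det[OF D_entries]
      by (intro open_Collect_neq holomorphic_on_imp_continuous_on continuous_intros)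
    show "cball 0 1 \<subseteq> {u. det (D u) \<noteq> 0}"
      using det_D by auto
    show "norm (L *v g u) \<le> C * norm x" if "u \<in> sphere 0 1" for u
    proof -
      have u: "cmod u = 1" "u \<noteq> 0"
        using that by auto
      have "x = mat u ** (mat (1 / u) - N) *v g u"
        using g det_D u by (simp add: D_def mat_mult_mat_inverse_minus)
      then have "norm x = norm ((mat (1 / u) - N) *v g u)"
        using u by (simp add: mat_mult_vector norm_vector_smult flip: matrix_vector_mul_assoc)
      with u show ?thesis
        using circle[of "1 / u" "g u"] by (simp add: norm_divide)
    qed
  qed (use w in simp)
  then show ?thesis
    by (simp add: \<open>g w = y\<close> x_def D_def)
qed

lemma resolvent_bound_exterior:
  fixes N :: "complex^'n^'n"
  assumes stable: "\<And>c. is_eigenvalue N c \<Longrightarrow> cmod c < 1"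
    and circle: "\<And>z y. cmod z = 1 \<Longrightarrow> norm y \<le> C * norm ((mat z - N) *v y)"
    and "C \<ge> 0" and z: "1 \<le> cmod z"
  shows "norm y \<le> C * norm ((mat z - N) *v y)"
proof -
  have "z \<noteq> 0" and w: "cmod (1 / z) \<le> 1"
    using z by (auto simp: norm_divide divide_le_eq)
  have "norm y \<le> C * norm ((mat 1 - mat (1 / z) ** N) *v y)"
    using max_modulus_resolvent_bound[of N "mat 1", OF stable _ w] circle by simp
  also have "mat 1 - mat (1 / z) ** N = mat (1 / z) ** (mat z - N)"
    using \<open>z \<noteq> 0\<close> mat_mult_mat_inverse_minus[of "1 / z" N] by simp
  also have "\<dots> *v y = (1 / z) *s ((mat z - N) *v y)"
    by (simp add: mat_mult_vector flip: matrix_vector_mul_assoc)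
  also have "norm \<dots> \<le> norm ((mat z - N) *v y)"
    using w by (simp add: norm_vector_smult mult_left_le_one_le)
  finally show ?thesis
    using \<open>C \<ge> 0\<close> by (meson mult_left_mono order_trans)
qed

lemma perturbed_eigenvalues_in_disc:
  fixes N E :: "complex^'n^'n"
  assumes exterior: "\<And>z y. 1 \<le> cmod z \<Longrightarrow> norm y \<le> C * norm ((mat z - N) *v y)"
    and E: "\<And>y. norm (E *v y) \<le> e * norm y" and "C \<ge> 0" and "C * e < 1"
    and "is_eigenvalue (N - E) c"
  shows "cmod c < 1"
proof (rule ccontr)
  assume "\<not> cmod c < 1"
  obtain y where "y \<noteq> 0" and y: "(N - E) *v y = c *s y"
    using \<open>is_eigenvalue (N - E) c\<close> unfolding is_eigenvalue_def by blast
  have "(mat c - N) *v y = - (E *v y)"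
    by (simp add: matrix_vector_mult_diff_rdistrib mat_mult_vector flip: y)
  then have "norm y \<le> C * norm (E *v y)"
    using exterior[of c y] \<open>\<not> cmod c < 1\<close> by simp
  also have "\<dots> \<le> C * e * norm y"
    using mult_left_mono[OF E \<open>C \<ge> 0\<close>] by (simp add: mult.assoc)
  finally show False
    using \<open>y \<noteq> 0\<close> \<open>C * e < 1\<close> by (simp add: mult_le_cancel_right1)
qed

section \<open>Bounds on the cost\<close>

lemma sym_pd_lower_bound:
  assumes "sym_pd Q"
  obtains q where "q > 0" and "\<And>a. q * (norm a)\<^sup>2 \<le> a \<bullet> (Q *v a)"
proof -
  have "continuous_on UNIV (\<lambda>a. - (a \<bullet> (Q *v a)))"
    unfolding matrix_vector_mult_def inner_vec_def by (intro continuous_intros)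
  moreover have "- ((c *\<^sub>R a) \<bullet> (Q *v (c *\<^sub>R a))) = c\<^sup>2 * - (a \<bullet> (Q *v a))" for c a
    by (simp add: matrix_vector_mult_scaleR power2_eq_square)
  ultimately obtain v where "norm v = 1"
    and v: "\<And>a. - (a \<bullet> (Q *v a)) \<le> - (v \<bullet> (Q *v v)) * (norm a)\<^sup>2"
    using homogeneous_quadratic_attains_sup[of "\<lambda>a. - (a \<bullet> (Q *v a))"] by blast
  then have "v \<bullet> (Q *v v) > 0"
    using assms unfolding sym_pd_def by (metis norm_zero zero_neq_one)
  moreover have "v \<bullet> (Q *v v) * (norm a)\<^sup>2 \<le> a \<bullet> (Q *v a)" for a
    using v[of a] by simp
  ultimately show ?thesis
    using that by blast
qed

definition vec_Re :: "complex^'n \<Rightarrow> real^'n" where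
  "vec_Re x = (\<chi> i. Re (x $ i))"

definition vec_Im :: "complex^'n \<Rightarrow> real^'n" where
  "vec_Im x = (\<chi> i. Im (x $ i))"

lemma inner_vec_Re_Im: "x \<bullet> y = vec_Re x \<bullet> vec_Re y + vec_Im x \<bullet> vec_Im y"
  by (simp add: inner_vec_def inner_complex_def vec_Re_def vec_Im_def sum.distrib)

lemma norm_power2_vec_Re_Im: "(norm x)\<^sup>2 = (norm (vec_Re x))\<^sup>2 + (norm (vec_Im x))\<^sup>2"
  by (simp add: power2_norm_eq_inner inner_vec_Re_Im)

lemma vec_Re_cmat_mult: "vec_Re (cmat S *v x) = S *v vec_Re x"
  by (simp add: vec_Re_def cmat_def matrix_vector_mult_def vec_eq_iff)

lemma vec_Im_cmat_mult: "vec_Im (cmat S *v x) = S *v vec_Im x"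
  by (simp add: vec_Im_def cmat_def matrix_vector_mult_def vec_eq_iff)

lemma inner_cmat_mult:
  "x \<bullet> (cmat S *v x) = vec_Re x \<bullet> (S *v vec_Re x) + vec_Im x \<bullet> (S *v vec_Im x)"
  by (simp add: inner_vec_Re_Im vec_Re_cmat_mult vec_Im_cmat_mult)

lemma cmat_cost_lower_bound:
  fixes Q :: "real^'n^'n" and R :: "real^'m^'m" and K :: "real^'n^'m"
  assumes q: "\<And>a. q * (norm a)\<^sup>2 \<le> a \<bullet> (Q *v a)"
    and r: "\<And>b. r * (norm b)\<^sup>2 \<le> b \<bullet> (R *v b)"
  shows "q * (norm x)\<^sup>2 + r * (norm (cmat K *v x))\<^sup>2
    \<le> x \<bullet> (cmat (Q + transpose K ** R ** K) *v x)"
proof -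
  have cost: "a \<bullet> ((Q + transpose K ** R ** K) *v a) = a \<bullet> (Q *v a) + (K *v a) \<bullet> (R *v (K *v a))"
    for a
  proof -
    have "a \<bullet> (transpose K *v b) = (K *v a) \<bullet> b" for b
      unfolding transpose_matrix_vector by (metis dot_lmul_matrix inner_commute)
    then show ?thesis
      by (simp add: matrix_vector_mult_add_rdistrib inner_add_right flip: matrix_vector_mul_assoc)
  qed
  show ?thesis
    unfolding inner_cmat_mult cost norm_power2_vec_Re_Im[of x] norm_power2_vec_Re_Im[of "cmat K *v x"]
      vec_Re_cmat_mult vec_Im_cmat_mult
    using q[of "vec_Re x"] q[of "vec_Im x"] r[of "K *v vec_Re x"] r[of "K *v vec_Im x"]
    by (simp add: distrib_left)
qed

lemma cmat_cost_selfadjoint: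
  assumes "sym_pd Q" and "sym_pd R"
  shows "x \<bullet> (cmat (Q + transpose K ** R ** K) *v y) = (cmat (Q + transpose K ** R ** K) *v x) \<bullet> y"
proof -
  have "transpose (mat_cnj (cmat (Q + transpose K ** R ** K))) = cmat (Q + transpose K ** R ** K)"
    using assms by (simp add: mat_cnj_cmat transpose_cmat transpose_add matrix_transpose_mul
        matrix_mul_assoc sym_pd_def)
  then show ?thesis
    by (metis inner_conj_transpose)
qed

lemma cmat_cost_nonneg:
  assumes "sym_pd Q" and "sym_pd R"
  shows "0 \<le> x \<bullet> (cmat (Q + transpose K ** R ** K) *v x)"
proof -
  obtain q r where "q > 0" "\<And>a. q * (norm a)\<^sup>2 \<le> a \<bullet> (Q *v a)"
    and "r > 0" "\<And>b. r * (norm b)\<^sup>2 \<le> b \<bullet> (R *v b)"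
    using sym_pd_lower_bound[OF assms(1)] sym_pd_lower_bound[OF assms(2)] by metis
  then have "q * (norm x)\<^sup>2 + r * (norm (cmat K *v x))\<^sup>2 \<le> x \<bullet> (cmat (Q + transpose K ** R ** K) *v x)"
    by (intro cmat_cost_lower_bound)
  moreover have "0 \<le> q * (norm x)\<^sup>2 + r * (norm (cmat K *v x))\<^sup>2"
    using \<open>q > 0\<close> \<open>r > 0\<close> by simp
  ultimately show ?thesis
    by linarith
qed

lemma unit_circle_cis:
  assumes "cmod z = 1"
  obtains \<omega> where "\<omega> \<in> {0..2*pi}" and "z = cis \<omega>"
  using Arg2pi[of z] assms unfolding is_Arg_def cis_conv_exp
  by (metis atLeastAtMost_iff less_eq_real_def mult_1 of_real_1)

lemma Jcost_bounds:
  fixes A :: "real^'nx^'nx" and B :: "real^'nu^'nx" and Q :: "real^'nx^'nx"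
    and R :: "real^'nu^'nu" and K :: "real^'nx^'nu"
  assumes K: "K \<in> stab_set A B" and Q: "sym_pd Q" and R: "sym_pd R"
  shows "0 \<le> Jcost A B Q R K"
    and "cmod z = 1 \<Longrightarrow> x \<bullet> (cmat (Q + transpose K ** R ** K) *v x)
      \<le> (Jcost A B Q R K)\<^sup>2 * (norm ((mat z - cmat (A - B ** K)) *v x))\<^sup>2"
proof -
  define N where "N = cmat (A - B ** K)"
  define S where "S = cmat (Q + transpose K ** R ** K)"
  define M where "M \<omega> = mat (cis \<omega>) - N" for \<omega>
  define H where "H \<omega> = transpose (mat_cnj (matrix_inv (M \<omega>))) ** S ** matrix_inv (M \<omega>)" for \<omega>
  have stable: "\<And>c. is_eigenvalue N c \<Longrightarrow> cmod c < 1"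
    using K by (simp add: stab_set_iff N_def)
  have sa: "x \<bullet> (S *v y) = (S *v x) \<bullet> y" and psd: "0 \<le> x \<bullet> (S *v x)" for x y
    unfolding S_def using cmat_cost_selfadjoint cmat_cost_nonneg Q R by blast+
  have inv: "invertible (M \<omega>)" for \<omega>
    using stable[of "cis \<omega>"] by (auto simp: M_def invertible_det_nz is_eigenvalue_iff_det)
  obtain c where "c > 0" and c: "\<And>z y. cmod z = 1 \<Longrightarrow> c * norm y \<le> norm ((mat z - N) *v y)"
    using unit_circle_resolvent_lower_bound[OF stable] by blast
  have "mat (cis (- \<omega>)) - cmat A + cmat (B ** K) = mat_cnj (M \<omega>)"
    and "mat (cis \<omega>) - cmat A + cmat (B ** K) = M \<omega>" for \<omega>
    by (simp_all add: M_def N_def cmat_diff vec_eq_iff mat_cnj_def cmat_def mat_def cis_cnj)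
  then have Jcost: "Jcost A B Q R K = (SUP \<omega>\<in>{0..2*pi}. sqrt (lambda_max (H \<omega>)))"
    by (simp add: Jcost_def H_def S_def matrix_inv_mat_cnj[OF inv])
  have "lambda_max (H \<omega>) \<le> norm S / c\<^sup>2" for \<omega>
    using lambda_max_congruence(3)[OF sa psd inv \<open>c > 0\<close>] c by (simp add: H_def M_def)
  then have "bdd_above ((\<lambda>\<omega>. sqrt (lambda_max (H \<omega>))) ` {0..2*pi})"
    by (intro bdd_aboveI2[of _ _ "sqrt (norm S / c\<^sup>2)"]) simp
  then have le_J: "sqrt (lambda_max (H \<omega>)) \<le> Jcost A B Q R K" if "\<omega> \<in> {0..2*pi}" for \<omega>
    unfolding Jcost using that by (rule cSUP_upper2) simp
  have lambda_nonneg: "0 \<le> lambda_max (H \<omega>)" for \<omega>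
    unfolding H_def by (rule lambda_max_congruence(1)[OF sa psd inv])
  show "0 \<le> Jcost A B Q R K"
    using order_trans[OF real_sqrt_ge_zero[OF lambda_nonneg] le_J, of 0] by simp
  assume "cmod z = 1"
  then obtain \<omega> where \<omega>: "\<omega> \<in> {0..2*pi}" "z = cis \<omega>"
    by (rule unit_circle_cis)
  have "x \<bullet> (S *v x) \<le> lambda_max (H \<omega>) * (norm (M \<omega> *v x))\<^sup>2"
    unfolding H_def by (rule lambda_max_congruence(2)[OF sa psd inv])
  also have "\<dots> \<le> (Jcost A B Q R K)\<^sup>2 * (norm (M \<omega> *v x))\<^sup>2"
    using sqrt_le_D[OF le_J[OF \<omega>(1)]] by (simp add: mult_right_mono)
  finally show "x \<bullet> (cmat (Q + transpose K ** R ** K) *v x)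
      \<le> (Jcost A B Q R K)\<^sup>2 * (norm ((mat z - cmat (A - B ** K)) *v x))\<^sup>2"
    by (simp add: S_def M_def N_def \<omega>(2))
qed

lemma power2_le_imp_le_div_sqrt:
  fixes a b J r :: real
  assumes "r * a\<^sup>2 \<le> J\<^sup>2 * b\<^sup>2" and "r > 0" and "J \<ge> 0" and "b \<ge> 0"
  shows "a \<le> J / sqrt r * b"
proof -
  have "(sqrt r * a)\<^sup>2 \<le> (J * b)\<^sup>2"
    using assms by (simp add: power_mult_distrib)
  then have "sqrt r * a \<le> J * b"
    by (rule power2_le_imp_le) (simp add: \<open>J \<ge> 0\<close> \<open>b \<ge> 0\<close>)
  then show ?thesis
    using \<open>r > 0\<close> by (simp add: field_simps)
qed

lemma Jcost_circle_bound:
  fixes A :: "real^'nx^'nx" and B :: "real^'nu^'nx" and Q :: "real^'nx^'nx"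
    and R :: "real^'nu^'nu" and K :: "real^'nx^'nu"
  assumes "K \<in> stab_set A B" and "sym_pd Q" and "sym_pd R"
    and "\<And>a. q * (norm a)\<^sup>2 \<le> a \<bullet> (Q *v a)" and "\<And>b. r * (norm b)\<^sup>2 \<le> b \<bullet> (R *v b)"
    and "cmod z = 1"
  shows "q * (norm x)\<^sup>2 + r * (norm (cmat K *v x))\<^sup>2
    \<le> (Jcost A B Q R K)\<^sup>2 * (norm ((mat z - cmat (A - B ** K)) *v x))\<^sup>2"
  using cmat_cost_lower_bound[OF assms(4,5)] Jcost_bounds(2)[OF assms(1-3,6)] by (rule order_trans)

lemma Jcost_dominates_norm:
  fixes A :: "real^'nx^'nx" and B :: "real^'nu^'nx" and Q :: "real^'nx^'nx" and R :: "real^'nu^'nu"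
  assumes Q: "sym_pd Q" and R: "sym_pd R"
  obtains c where "c > 0" and "\<And>K. K \<in> stab_set A B \<Longrightarrow> c * norm K \<le> Jcost A B Q R K"
proof -
  obtain q r where q: "\<And>a. q * (norm a)\<^sup>2 \<le> a \<bullet> (Q *v a)" and "q > 0"
    and r: "\<And>b. r * (norm b)\<^sup>2 \<le> b \<bullet> (R *v b)" and "r > 0"
    using sym_pd_lower_bound[OF Q] sym_pd_lower_bound[OF R] by metis
  define \<kappa> where "\<kappa> = real CARD('nu) * real CARD('nx)"
  have "norm K \<le> \<kappa> * (Jcost A B Q R K / sqrt r)" if K: "K \<in> stab_set A B" for K
  proof -
    let ?J = "Jcost A B Q R K" and ?N = "cmat (A - B ** K)"
    have stable: "\<And>c. is_eigenvalue ?N c \<Longrightarrow> cmod c < 1"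
      using K by (simp add: stab_set_iff)
    have "?J \<ge> 0"
      by (rule Jcost_bounds(1)[OF K Q R])
    have circle: "norm (cmat K *v y) \<le> ?J / sqrt r * norm ((mat z - ?N) *v y)" if "cmod z = 1"
      for z y
    proof (rule power2_le_imp_le_div_sqrt)
      have "r * (norm (cmat K *v y))\<^sup>2 \<le> q * (norm y)\<^sup>2 + r * (norm (cmat K *v y))\<^sup>2"
        using \<open>q > 0\<close> by simp
      also have "\<dots> \<le> ?J\<^sup>2 * (norm ((mat z - ?N) *v y))\<^sup>2"
        by (rule Jcost_circle_bound[OF K Q R q r that])
      finally show "r * (norm (cmat K *v y))\<^sup>2 \<le> ?J\<^sup>2 * (norm ((mat z - ?N) *v y))\<^sup>2" .
    qed (use \<open>r > 0\<close> \<open>?J \<ge> 0\<close> in auto)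
    have "norm (cmat K *v y) \<le> ?J / sqrt r * norm y" for y
      using max_modulus_resolvent_bound[OF stable circle, of 0 y]
      by (simp add: mat_mult_matrix mat_def[symmetric])
    then show ?thesis
      unfolding \<kappa>_def by (metis norm_matrix_le_of_mult_bound norm_cmat)
  qed
  moreover have "\<kappa> > 0"
    by (simp add: \<kappa>_def)
  ultimately show ?thesis
    using \<open>r > 0\<close> by (intro that[of "sqrt r / \<kappa>"]) (auto simp: field_simps)
qed

lemma stab_set_perturbation:
  fixes A :: "real^'nx^'nx" and B :: "real^'nu^'nx" and K K' :: "real^'nx^'nu"
  assumes exterior: "\<And>z y. 1 \<le> cmod z \<Longrightarrow> norm y \<le> C * norm ((mat z - cmat (A - B ** K)) *v y)"
    and "C \<ge> 0" and small: "C * (norm B * norm (K' - K)) < 1"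
  shows "K' \<in> stab_set A B"
proof -
  have "norm (cmat (B ** (K' - K)) *v y) \<le> norm B * norm (K' - K) * norm y" for y
  proof -
    have "norm (cmat (B ** (K' - K)) *v y) \<le> norm (cmat B) * norm (cmat (K' - K) *v y)"
      unfolding cmat_mult matrix_vector_mul_assoc[symmetric] by (rule norm_matrix_vector_mult_le)
    also have "\<dots> \<le> norm (cmat B) * (norm (cmat (K' - K)) * norm y)"
      by (intro mult_left_mono norm_matrix_vector_mult_le norm_ge_zero)
    finally show ?thesis
      by (simp add: norm_cmat mult.assoc)
  qed
  moreover have "B ** K' = B ** K + B ** (K' - K)"
    by (simp flip: matrix_add_ldistrib)
  then have "cmat (A - B ** K') = cmat (A - B ** K) - cmat (B ** (K' - K))"
    by (simp add: cmat_def vec_eq_iff)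
  ultimately show ?thesis
    unfolding stab_set_iff using perturbed_eigenvalues_in_disc[OF exterior _ \<open>C \<ge> 0\<close> small]
    by auto
qed

lemma Jcost_sublevel_neighbourhood:
  fixes A :: "real^'nx^'nx" and B :: "real^'nu^'nx" and Q :: "real^'nx^'nx" and R :: "real^'nu^'nu"
  assumes Q: "sym_pd Q" and R: "sym_pd R" and "C > 0"
  shows "\<exists>\<delta>>0. \<forall>K\<in>stab_set A B. Jcost A B Q R K \<le> C \<longrightarrow> ball K \<delta> \<subseteq> stab_set A B"
proof -
  obtain q r where q: "\<And>a. q * (norm a)\<^sup>2 \<le> a \<bullet> (Q *v a)" and "q > 0"
    and r: "\<And>b. r * (norm b)\<^sup>2 \<le> b \<bullet> (R *v b)" and "r > 0"
    using sym_pd_lower_bound[OF Q] sym_pd_lower_bound[OF R] by metis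
  define C' where "C' = C / sqrt q"
  define \<delta> where "\<delta> = 1 / (C' * (norm B + 1))"
  have "C' > 0" "norm B + 1 > 0" "\<delta> > 0"
    using \<open>C > 0\<close> \<open>q > 0\<close> by (simp_all add: C'_def \<delta>_def add_nonneg_pos)
  have "K' \<in> stab_set A B" if K: "K \<in> stab_set A B" and "Jcost A B Q R K \<le> C" and "K' \<in> ball K \<delta>"
    for K K'
  proof (rule stab_set_perturbation)
    let ?J = "Jcost A B Q R K" and ?N = "cmat (A - B ** K)"
    have "0 \<le> ?J"
      by (rule Jcost_bounds(1)[OF K Q R])
    have circle: "norm y \<le> C' * norm ((mat z - ?N) *v y)" if "cmod z = 1" for z y
    proof (unfold C'_def, rule power2_le_imp_le_div_sqrt)
      have "q * (norm y)\<^sup>2 \<le> q * (norm y)\<^sup>2 + r * (norm (cmat K *v y))\<^sup>2"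
        using \<open>r > 0\<close> by simp
      also have "\<dots> \<le> ?J\<^sup>2 * (norm ((mat z - ?N) *v y))\<^sup>2"
        by (rule Jcost_circle_bound[OF K Q R q r that])
      also have "\<dots> \<le> C\<^sup>2 * (norm ((mat z - ?N) *v y))\<^sup>2"
        using \<open>0 \<le> ?J\<close> \<open>?J \<le> C\<close> by (intro mult_right_mono power_mono) simp_all
      finally show "q * (norm y)\<^sup>2 \<le> C\<^sup>2 * (norm ((mat z - ?N) *v y))\<^sup>2" .
    qed (use \<open>q > 0\<close> \<open>C > 0\<close> in auto)
    show "norm y \<le> C' * norm ((mat z - ?N) *v y)" if "1 \<le> cmod z" for z y
      using K resolvent_bound_exterior[OF _ circle _ that] \<open>C' > 0\<close> by (simp add: stab_set_iff)
    show "C' \<ge> 0"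
      using \<open>C' > 0\<close> by simp
    have "norm B * norm (K' - K) \<le> norm B * \<delta>"
      using \<open>K' \<in> ball K \<delta>\<close> by (intro mult_left_mono) (auto simp: dist_norm norm_minus_commute)
    also have "\<dots> < (norm B + 1) * \<delta>"
      using \<open>\<delta> > 0\<close> by simp
    also have "\<dots> = 1 / C'"
      using \<open>norm B + 1 > 0\<close> by (simp add: \<delta>_def)
    finally show "C' * (norm B * norm (K' - K)) < 1"
      using \<open>C' > 0\<close> by (simp add: field_simps)
  qed
  with \<open>\<delta> > 0\<close> show ?thesis
    by blast
qed

lemma filterlim_at_top_approaching_frontier:
  fixes J :: "'a::metric_space \<Rightarrow> real"
  assumes uniform: "\<And>C. C > 0 \<Longrightarrow> \<exists>\<delta>>0. \<forall>x\<in>S. J x \<le> C \<longrightarrow> ball x \<delta> \<subseteq> S"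
    and "\<forall>l. X l \<in> S" and "X \<longlonglongrightarrow> x0" and "x0 \<in> frontier S"
  shows "filterlim (\<lambda>l. J (X l)) at_top sequentially"
  unfolding filterlim_at_top
proof (rule ccontr)
  assume "\<not> (\<forall>Z. \<forall>\<^sub>F l in sequentially. Z \<le> J (X l))"
  then obtain Z where "\<exists>\<^sub>F l in sequentially. J (X l) < Z"
    by (auto simp: not_eventually not_le)
  obtain \<delta> where "\<delta> > 0" and \<delta>: "\<And>x. x \<in> S \<Longrightarrow> J x \<le> max Z 1 \<Longrightarrow> ball x \<delta> \<subseteq> S"
    using uniform[of "max Z 1"] by (metis max.strict_coboundedI2 zero_less_one)
  have "\<forall>\<^sub>F l in sequentially. dist (X l) x0 < \<delta>"
    using \<open>X \<longlonglongrightarrow> x0\<close> \<open>\<delta> > 0\<close> by (rule tendstoD)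
  with \<open>\<exists>\<^sub>F l in sequentially. J (X l) < Z\<close>
  obtain l where "J (X l) < Z" and "dist (X l) x0 < \<delta>"
    by (metis (mono_tags, lifting) frequently_eventually_conj frequently_ex)
  then have "ball (X l) \<delta> \<subseteq> S" and "x0 \<in> ball (X l) \<delta>"
    using \<delta>[of "X l"] \<open>\<forall>l. X l \<in> S\<close> by simp_all
  then have "x0 \<in> interior S"
    by (meson interiorI open_ball)
  with \<open>x0 \<in> frontier S\<close> show False
    by (simp add: frontier_def)
qed

theorem lemma1:
  fixes A :: "real^'nx^'nx" and B :: "real^'nu^'nx"
    and Q :: "real^'nx^'nx" and R :: "real^'nu^'nu"
    and K :: "nat \<Rightarrow> real^'nx^'nu"
  assumes "sym_pd Q" and "sym_pd R" and "stabilizable A B"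
    and "\<forall>l. K l \<in> stab_set A B"
    and "filterlim (\<lambda>l. norm (K l)) at_top sequentially
         \<or> (\<exists>K0 \<in> frontier (stab_set A B). K \<longlonglongrightarrow> K0)"
  shows "filterlim (\<lambda>l. Jcost A B Q R (K l)) at_top sequentially"
  using assms(5)
proof
  assume "filterlim (\<lambda>l. norm (K l)) at_top sequentially"
  obtain c where "c > 0" and c: "\<And>K. K \<in> stab_set A B \<Longrightarrow> c * norm K \<le> Jcost A B Q R K"
    using Jcost_dominates_norm[OF assms(1,2)] by blast
  have "filterlim (\<lambda>l. c * norm (K l)) at_top sequentially"
    using tendsto_const \<open>c > 0\<close> \<open>filterlim (\<lambda>l. norm (K l)) at_top sequentially\<close>
    by (rule filterlim_tendsto_pos_mult_at_top)
  then show ?thesis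
    by (rule filterlim_at_top_mono) (use c assms(4) in auto)
next
  assume "\<exists>K0 \<in> frontier (stab_set A B). K \<longlonglongrightarrow> K0"
  then obtain K0 where "K \<longlonglongrightarrow> K0" and "K0 \<in> frontier (stab_set A B)"
    by blast
  with Jcost_sublevel_neighbourhood[OF assms(1,2)] assms(4) show ?thesis
    by (rule filterlim_at_top_approaching_frontier)
qed

end
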